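(* Let $\varphi$ be a CNF formula with $m$ clauses. During the execution of Algorithm msu1 on $\varphi$, the total number of blocking variables created is $\mathcal{O}(m^2)$ in the worst case.
   Context: Algorithm msu1 (Fu and Malik). Input: a CNF formula $\varphi$ (a finite set of clauses). All clauses of $\varphi$ are tagged non-auxiliary. The working formula is initialised to $\varphi_W:=\varphi$. Each iteration calls a SAT oracle on $\varphi_W$. If $\varphi_W$ is unsatisfiable, the oracle returns an unsatisfiable core $\varphi_C\subseteq\varphi_W$, i.e. a subset of the clauses of $\varphi_W$ that is itself unsatisfiable. Then, for each non-auxiliary clause $\omega\in\varphi_C$, a fresh variable $b$ (a blocking variable) is created and $\omega$ is replaced in $\varphi_W$ by $\omega\vee b$. The new clause is tagged non-auxiliary, and $b$ is associated with the original clause of $\varphi$ from which $\omega$ descends. Let $BV$ be the set of blocking variables created in this iteration. A CNF encoding of $\sum_{b\in BV} b=1$ is added to $\varphi_W$; its clauses are tagged auxiliary. An assignment to $BV$ extends to a satisfying assignment of the encoding iff exactly one variable of $BV$ is true. If $\varphi_W$ is satisfiable, the algorithm stops and returns $|\varphi|-\nu$, where $\nu$ is the number of blocking variables assigned value 1. *)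

theory Defs
  imports Main
begin

type_synonym lit = "nat \<times> bool"
type_synonym clause = "lit set"
type_synonym cnf = "clause set"

definition sat :: "(nat \<Rightarrow> bool) \<Rightarrow> cnf \<Rightarrow> bool" where
  "sat \<sigma> F \<longleftrightarrow> (\<forall>cl\<in>F. \<exists>(x, p)\<in>cl. \<sigma> x = p)"

definition satisfiable :: "cnf \<Rightarrow> bool" where
  "satisfiable F \<longleftrightarrow> (\<exists>\<sigma>. sat \<sigma> F)"

definition vars :: "cnf \<Rightarrow> nat set" where
  "vars F = fst ` \<Union> F"

definition exactly_one_encoding :: "cnf \<Rightarrow> nat set \<Rightarrow> bool" where
  "exactly_one_encoding E BV \<longleftrightarrow> finite E \<and> (\<forall>cl\<in>E. finite cl) \<and>
     (\<forall>\<sigma>. (\<exists>\<tau>. (\<forall>x\<in>BV. \<tau> x = \<sigma> x) \<and> sat \<tau> E) \<longleftrightarrow> card {x\<in>BV. \<sigma> x} = 1)"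

text \<open>A state (W, A, n) consists of:
  W c = the current non-auxiliary working clause descending from original clause c,
  A = the set of auxiliary clauses, n = total number of blocking variables created so far.
  The working formula is  W ` phi \<union> A.  In a step the oracle returns an unsatisfiable core,
  whose non-auxiliary part is {W c | c \<in> C} and auxiliary part is Ca; each W c (c \<in> C)
  gets a fresh blocking variable b c; a cardinality encoding E of sum = 1 over the new
  blocking variables (with any extra variables fresh) is added.\<close>
inductive msu1_reach :: "cnf \<Rightarrow> (clause \<Rightarrow> clause) \<times> cnf \<times> nat \<Rightarrow> bool" for \<phi> :: cnf where
  init: "msu1_reach \<phi> (id, {}, 0)"
| step: "\<lbrakk> msu1_reach \<phi> (W, A, n);
           \<not> satisfiable (W ` \<phi> \<union> A);
           C \<subseteq> \<phi>; Ca \<subseteq> A;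
           \<not> satisfiable (W ` C \<union> Ca);
           inj_on b C;
           b ` C \<inter> vars (W ` \<phi> \<union> A) = {};
           exactly_one_encoding E (b ` C);
           vars E \<inter> vars (W ` \<phi> \<union> A) = {} \<rbrakk>
   \<Longrightarrow> msu1_reach \<phi> ((\<lambda>c. if c \<in> C then insert (b c, True) (W c) else W c),
                      A \<union> E, n + card C)"

end

theory Submission
  imports Defs
begin

(* Bound the number of iterations, not the blocking variables directly:
   each iteration creates at most |phi| blocking variables (one per core clause), so
   it suffices that msu1 performs at most |phi| iterations.  For this we keep an
   assignment tau that satisfies all auxiliary clauses and use as potential the
   number of working clauses falsified by tau.  In an unsatisfiable core, tau
   satisfies the auxiliary part, so it falsifies some relaxed clause W c0.  Patching
   tau on the fresh variables -- b c0 true, the other new blocking variables false,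
   the encoding's auxiliaries as the encoding demands -- keeps A satisfied, satisfies
   the new encoding, satisfies the relaxed W c0, and leaves every previously
   satisfied working clause satisfied.  So the potential drops by one per iteration,
   giving:  falsified + iterations <= |phi|  and  n <= iterations * |phi| <= |phi|^2.
   The file proves the frame property of sat, the witness of an exactly-one
   encoding, the single-step progress lemma, the invariant, and then the theorem. *)

definition falsified :: "(nat \<Rightarrow> bool) \<Rightarrow> (clause \<Rightarrow> clause) \<Rightarrow> cnf \<Rightarrow> clause set" where
  "falsified \<tau> W \<phi> = {c \<in> \<phi>. \<not> sat \<tau> {W c}}"

lemma sat_cong_vars:
  assumes "\<forall>x\<in>vars F. \<sigma> x = \<tau> x"
  shows "sat \<sigma> F \<longleftrightarrow> sat \<tau> F"
proof -
  have agree: "\<sigma> x = \<tau> x" if "cl \<in> F" "(x, p) \<in> cl" for cl x p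
    using assms that unfolding vars_def by force
  show ?thesis
    unfolding sat_def by (intro ball_cong refl) (auto dest: agree)
qed

lemma sat_Un [simp]: "sat \<tau> (F \<union> G) \<longleftrightarrow> sat \<tau> F \<and> sat \<tau> G"
  unfolding sat_def by blast

lemma sat_image: "sat \<tau> (W ` C) \<longleftrightarrow> (\<forall>c\<in>C. sat \<tau> {W c})"
  unfolding sat_def by auto

lemma sat_mono: "F \<subseteq> G \<Longrightarrow> sat \<tau> G \<Longrightarrow> sat \<tau> F"
  unfolding sat_def by blast

lemma sat_singleton_mono: "cl \<subseteq> cl' \<Longrightarrow> sat \<tau> {cl} \<Longrightarrow> sat \<tau> {cl'}"
  unfolding sat_def by blast

lemma vars_mono: "F \<subseteq> G \<Longrightarrow> vars F \<subseteq> vars G"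
  unfolding vars_def by auto

lemma exactly_one_witness:
  assumes "exactly_one_encoding E BV" and "b0 \<in> BV"
  obtains \<tau> where "\<forall>x\<in>BV. \<tau> x \<longleftrightarrow> x = b0" and "sat \<tau> E"
proof -
  have "{x \<in> BV. x = b0} = {b0}" using assms(2) by auto
  then have "card {x \<in> BV. x = b0} = 1" by simp
  with assms(1) have "\<exists>\<tau>. (\<forall>x\<in>BV. \<tau> x = (x = b0)) \<and> sat \<tau> E"
    unfolding exactly_one_encoding_def by (elim conjE allE[of _ "\<lambda>x. x = b0"]) simp
  then show ?thesis using that by blast
qed

lemma msu1_step_progress:
  assumes sat_A: "sat \<tau> A"
    and core: "C \<subseteq> \<phi>" "Ca \<subseteq> A" "\<not> satisfiable (W ` C \<union> Ca)"
    and fresh_b: "b ` C \<inter> vars (W ` \<phi> \<union> A) = {}"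
    and enc: "exactly_one_encoding E (b ` C)"
    and fresh_E: "vars E \<inter> vars (W ` \<phi> \<union> A) = {}"
  defines "W' \<equiv> \<lambda>c. if c \<in> C then insert (b c, True) (W c) else W c"
  shows "\<exists>\<sigma>. sat \<sigma> (A \<union> E) \<and> falsified \<sigma> W' \<phi> \<subset> falsified \<tau> W \<phi>"
proof -
  text \<open>\<open>\<tau>\<close> satisfies the auxiliary part of the core, so it falsifies a relaxed clause.\<close>
  have "\<not> sat \<tau> (W ` C)"
    using core(3) sat_mono[OF core(2) sat_A] unfolding satisfiable_def by auto
  then obtain c0 where c0: "c0 \<in> C" "\<not> sat \<tau> {W c0}"
    unfolding sat_image by blast
  obtain \<tau>' where \<tau>'_BV: "\<forall>x\<in>b ` C. \<tau>' x \<longleftrightarrow> x = b c0" and \<tau>'_E: "sat \<tau>' E"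
    using exactly_one_witness[OF enc] c0(1) by blast
  define \<sigma> where "\<sigma> x = (if x \<in> b ` C \<union> vars E then \<tau>' x else \<tau> x)" for x
  let ?V = "vars (W ` \<phi> \<union> A)"
  have \<sigma>_old: "\<forall>x\<in>?V. \<sigma> x = \<tau> x"
    using fresh_b fresh_E unfolding \<sigma>_def by auto
  have "sat \<sigma> A"
    using sat_A sat_cong_vars[of A \<sigma> \<tau>] \<sigma>_old vars_mono[of A "W ` \<phi> \<union> A"] by blast
  moreover have "sat \<sigma> E"
    using \<tau>'_E sat_cong_vars[of E \<sigma> \<tau>'] unfolding \<sigma>_def by simp
  moreover have "falsified \<sigma> W' \<phi> \<subseteq> falsified \<tau> W \<phi> - {c0}"
  proof
    fix c assume c: "c \<in> falsified \<sigma> W' \<phi>"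
    text \<open>The relaxed clause \<open>W' c0\<close> is satisfied by its blocking variable.\<close>
    have "sat \<sigma> {W' c0}"
      using c0(1) \<tau>'_BV unfolding \<sigma>_def W'_def sat_def by force
    then have "c \<noteq> c0" using c unfolding falsified_def by blast
    text \<open>Clauses satisfied before stay satisfied: \<open>\<sigma>\<close> agrees with \<open>\<tau>\<close> on their variables.\<close>
    moreover have "\<not> sat \<tau> {W c}"
    proof
      assume "sat \<tau> {W c}"
      moreover have "vars {W c} \<subseteq> ?V" using c unfolding falsified_def by (intro vars_mono) auto
      ultimately have "sat \<sigma> {W c}" using sat_cong_vars[of "{W c}" \<sigma> \<tau>] \<sigma>_old by blast
      then have "sat \<sigma> {W' c}" by (rule sat_singleton_mono[rotated]) (auto simp: W'_def)
      with c show False unfolding falsified_def by blast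
    qed
    ultimately show "c \<in> falsified \<tau> W \<phi> - {c0}" using c unfolding falsified_def by blast
  qed
  moreover have "c0 \<in> falsified \<tau> W \<phi>" using c0 core(1) unfolding falsified_def by blast
  ultimately show ?thesis by (intro exI[of _ \<sigma>]) auto
qed

lemma msu1_invariant:
  assumes "msu1_reach \<phi> (W, A, n)" and "finite \<phi>"
  shows "\<exists>k \<tau>. sat \<tau> A \<and> card (falsified \<tau> W \<phi>) + k \<le> card \<phi> \<and> n \<le> k * card \<phi>"
  using assms
proof (induction "(W, A, n)" arbitrary: W A n rule: msu1_reach.induct)
  case init
  have "card (falsified (\<lambda>_. True) id \<phi>) \<le> card \<phi>"
    using init.prems unfolding falsified_def by (intro card_mono) auto
  then show ?case by (intro exI[of _ 0] exI[of _ "\<lambda>_. True"]) (simp add: sat_def)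
next
  case (step W A n C Ca b E)
  obtain k \<tau> where sat_A: "sat \<tau> A" and pot: "card (falsified \<tau> W \<phi>) + k \<le> card \<phi>"
    and bound: "n \<le> k * card \<phi>"
    using step.hyps(2)[OF step.prems] by blast
  let ?W' = "\<lambda>c. if c \<in> C then insert (b c, True) (W c) else W c"
  obtain \<sigma> where sat_AE: "sat \<sigma> (A \<union> E)" and shrink: "falsified \<sigma> ?W' \<phi> \<subset> falsified \<tau> W \<phi>"
    using msu1_step_progress[OF sat_A step.hyps(4-6,8-10)] by blast
  have "finite (falsified \<tau> W \<phi>)" using step.prems unfolding falsified_def by simp
  then have "card (falsified \<sigma> ?W' \<phi>) < card (falsified \<tau> W \<phi>)"
    using shrink by (rule psubset_card_mono)
  with pot have pot': "card (falsified \<sigma> ?W' \<phi>) + Suc k \<le> card \<phi>" by linarith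
  have "card C \<le> card \<phi>" using step.hyps(4) step.prems by (simp add: card_mono)
  with bound have "n + card C \<le> Suc k * card \<phi>" by simp
  with sat_AE pot' show ?case by blast
qed

theorem proposition5:
  shows "\<exists>K::nat. \<forall>\<phi> W A n. finite \<phi> \<longrightarrow> (\<forall>cl\<in>\<phi>. finite cl) \<longrightarrow>
           msu1_reach \<phi> (W, A, n) \<longrightarrow> n \<le> K * (card \<phi>)\<^sup>2"
proof (intro exI[of _ 1] allI impI)
  fix \<phi> W A n assume fin: "finite \<phi>" and reach: "msu1_reach \<phi> (W, A, n)"
  obtain k \<tau> where "card (falsified \<tau> W \<phi>) + k \<le> card \<phi>" and n_bound: "n \<le> k * card \<phi>"
    using msu1_invariant[OF reach fin] by blast
  then have "k * card \<phi> \<le> card \<phi> * card \<phi>" by (intro mult_le_mono1) simp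
  with n_bound show "n \<le> 1 * (card \<phi>)\<^sup>2" unfolding power2_eq_square by linarith
qed

end
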